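(* Let $k$ be an integer and $l,t$ integers with $1\le l,t\le k-2\le q-2$. Let $r\in\mathbb F$ and let $X:\mathbb F\to C$ be any function. Then $$\sum_{b\in\mathbb F}\ \sum_{s\in\mathbb F,\,s\ne b}\frac{(b-r)^t}{(s-b)^l}X(s)=\begin{cases}\sum_{s\in\mathbb F}(-1)^{l+1}\binom{t}{l}(s-r)^{t-l}X(s)&\text{if } t>l,\\ \sum_{s\in\mathbb F}(-1)^{l+1}X(s)&\text{if } t=l,\\ 0&\text{if } t<l.\end{cases}$$
   Context: $\mathbb F$ is a finite field with $q$ elements, and $C$ is a field containing $\mathbb F$ (in the paper, the completion of an algebraic closure of $\mathbb F((1/T))$). Binomial coefficients are read in $\mathbb F$; $0^0=1$. *)

theory Defs
  imports Main
begin

text \<open>A ring homomorphism (hence, between fields, an embedding) of the finite field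
  into the field C; it realises "C is a field containing F".\<close>
definition field_embedding :: "('f::field \<Rightarrow> 'c::field) \<Rightarrow> bool" where
  "field_embedding \<phi> \<longleftrightarrow>
     \<phi> 1 = 1 \<and> (\<forall>x y. \<phi> (x + y) = \<phi> x + \<phi> y) \<and> (\<forall>x y. \<phi> (x * y) = \<phi> x * \<phi> y)"

end

theory Submission
  imports Defs "HOL-Computational_Algebra.Polynomial"
begin

text \<open>With \<open>u = s - b\<close> and \<open>c = s - r\<close> the inner sum over \<open>b\<close> becomes the sum over
  nonzero \<open>u\<close> of \<open>(c - u)^t / u^l\<close>. Expanding binomially leaves the sums of
  \<open>u^(j - l)\<close> over nonzero \<open>u\<close>: for \<open>0 < |j - l| \<le> q - 2\<close> some nonzero \<open>a\<close> has \<open>a^(j - l) \<noteq> 1\<close>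
  (there are at most \<open>|j - l|\<close> roots of unity of that order), and rescaling by \<open>a\<close> shows
  the sum vanishes; for \<open>j = l\<close> it is \<open>q - 1 = -1\<close>. So only the binomial term \<open>j = l\<close>
  survives, and it is absent when \<open>t < l\<close>.\<close>

lemma of_nat_card_UNIV_eq_0: "of_nat (card (UNIV::'a::{finite,ring_1} set)) = (0::'a)"
proof -
  have "(\<Sum>x\<in>(UNIV::'a set). x) = (\<Sum>x\<in>UNIV. x + 1)"
    by (rule sum.reindex_bij_witness[of _ "\<lambda>x. x + 1" "\<lambda>x. x - 1"]) auto
  also have "\<dots> = (\<Sum>x\<in>UNIV. x) + of_nat (card (UNIV::'a set))"
    by (simp add: sum.distrib)
  finally show ?thesis by simp
qed

lemma card_roots_of_unity_le:
  assumes "1 \<le> n"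
  shows "card {x::'a::idom. x ^ n = 1} \<le> n"
proof -
  define p :: "'a poly" where "p = monom 1 n - 1"
  have "coeff p n = 1" using assms by (simp add: p_def)
  then have "p \<noteq> 0" by auto
  have "degree p \<le> n"
    unfolding p_def by (rule degree_diff_le) (auto simp: degree_monom_le)
  moreover have "{x. x ^ n = 1} = {x. poly p x = 0}"
    by (auto simp: p_def poly_monom)
  ultimately show ?thesis
    using card_poly_roots_bound[OF \<open>p \<noteq> 0\<close>] by simp
qed

lemma sum_nonzero_power:
  assumes "n + 2 \<le> card (UNIV::'f::{finite,field} set)"
  shows "(\<Sum>u\<in>UNIV - {0::'f}. u ^ n) = (if n = 0 then -1 else 0)"
proof (cases "n = 0")
  case True
  have "of_nat (card (UNIV - {0::'f})) = (of_nat (card (UNIV::'f set)) - 1 :: 'f)"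
    using assms by (simp add: card_Diff_singleton)
  then show ?thesis
    using True by (simp add: of_nat_card_UNIV_eq_0)
next
  case False
  have "card {x::'f. x ^ n = 1} < card (UNIV - {0::'f})"
    using card_roots_of_unity_le[of n, where 'a='f] False assms
    by (simp add: card_Diff_singleton)
  then obtain a :: 'f where a: "a \<noteq> 0" "a ^ n \<noteq> 1"
    by (metis (mono_tags, lifting) Diff_iff card_mono finite mem_Collect_eq not_le subsetI singletonI)
  have "(\<Sum>u\<in>UNIV - {0::'f}. u ^ n) = (\<Sum>u\<in>UNIV - {0::'f}. (a * u) ^ n)"
    using a by (intro sum.reindex_bij_witness[of _ "\<lambda>x. a * x" "\<lambda>x. x / a"]) auto
  also have "\<dots> = a ^ n * (\<Sum>u\<in>UNIV - {0::'f}. u ^ n)"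
    by (simp add: power_mult_distrib sum_distrib_left)
  finally show ?thesis
    using a(2) False by (metis mult_cancel_right1)
qed

lemma sum_nonzero_power_divide_power:
  assumes "j + 2 \<le> card (UNIV::'f::{finite,field} set)" "l + 2 \<le> card (UNIV::'f set)"
  shows "(\<Sum>u\<in>UNIV - {0::'f}. u ^ j / u ^ l) = (if j = l then -1 else 0)"
proof (cases "l \<le> j")
  case True
  have "(\<Sum>u\<in>UNIV - {0::'f}. u ^ j / u ^ l) = (\<Sum>u\<in>UNIV - {0::'f}. u ^ (j - l))"
    using True by (intro sum.cong) (auto simp: power_diff)
  also have "\<dots> = (if j = l then -1 else 0)"
    using True assms by (subst sum_nonzero_power) auto
  finally show ?thesis .
next
  case False
  have "(\<Sum>u\<in>UNIV - {0::'f}. u ^ j / u ^ l) = (\<Sum>u\<in>UNIV - {0::'f}. inverse u ^ (l - j))"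
  proof (intro sum.cong refl)
    fix u :: 'f
    assume "u \<in> UNIV - {0}"
    moreover have "u ^ l = u ^ j * u ^ (l - j)"
      using False by (simp flip: power_add)
    ultimately show "u ^ j / u ^ l = inverse u ^ (l - j)"
      by (simp add: divide_inverse power_inverse)
  qed
  also have "\<dots> = (\<Sum>u\<in>UNIV - {0::'f}. u ^ (l - j))"
    by (rule sum.reindex_bij_witness[of _ inverse inverse]) auto
  also have "\<dots> = 0"
    using False assms by (subst sum_nonzero_power) auto
  finally show ?thesis
    using False by simp
qed

lemma sum_punctured_binomial_quotient:
  fixes s r :: "'f::{finite,field}"
  assumes "l + 2 \<le> card (UNIV::'f set)" "t + 2 \<le> card (UNIV::'f set)"
  shows "(\<Sum>b\<in>UNIV - {s}. (b - r) ^ t / (s - b) ^ l) =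
    (if l \<le> t then (-1) ^ (l + 1) * (of_nat (t choose l) * (s - r) ^ (t - l)) else 0)"
proof -
  define c where "c = s - r"
  define a where "a j = of_nat (t choose j) * (-1) ^ j * c ^ (t - j)" for j
  have "(\<Sum>b\<in>UNIV - {s}. (b - r) ^ t / (s - b) ^ l) = (\<Sum>u\<in>UNIV - {0}. (-u + c) ^ t / u ^ l)"
    by (rule sum.reindex_bij_witness[of _ "\<lambda>u. s - u" "\<lambda>b. s - b"]) (auto simp: c_def)
  also have "\<dots> = (\<Sum>u\<in>UNIV - {0}. \<Sum>j\<le>t. a j * (u ^ j / u ^ l))"
  proof (intro sum.cong refl)
    fix u :: 'f
    have "(-u + c) ^ t = (\<Sum>j\<le>t. of_nat (t choose j) * (-u) ^ j * c ^ (t - j))"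
      by (rule binomial_ring)
    also have "\<dots> = (\<Sum>j\<le>t. a j * u ^ j)"
      by (simp add: a_def power_minus[of u] mult_ac)
    finally show "(-u + c) ^ t / u ^ l = (\<Sum>j\<le>t. a j * (u ^ j / u ^ l))"
      by (simp add: sum_divide_distrib)
  qed
  also have "\<dots> = (\<Sum>j\<le>t. a j * (\<Sum>u\<in>UNIV - {0}. u ^ j / u ^ l))"
    unfolding sum_distrib_left by (rule sum.swap)
  also have "\<dots> = (\<Sum>j\<le>t. if j = l then - a j else 0)"
    using assms by (intro sum.cong refl) (simp add: sum_nonzero_power_divide_power)
  also have "\<dots> = (if l \<le> t then (-1) ^ (l + 1) * (of_nat (t choose l) * c ^ (t - l)) else 0)"
    by (simp add: a_def)
  finally show ?thesis
    by (simp add: c_def)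
qed

lemma field_embedding_0:
  assumes "field_embedding \<phi>"
  shows "\<phi> 0 = 0"
proof -
  have "\<phi> 0 + \<phi> 0 = \<phi> 0 + 0"
    using assms unfolding field_embedding_def by (metis add_0 add_0_right)
  then show ?thesis
    by (rule add_left_imp_eq)
qed

lemma field_embedding_minus:
  assumes "field_embedding \<phi>"
  shows "\<phi> (- x) = - \<phi> x"
proof -
  have "\<phi> (- x) + \<phi> x = \<phi> (- x + x)"
    using assms unfolding field_embedding_def by (simp only:)
  also have "\<dots> = 0"
    by (simp add: field_embedding_0[OF assms])
  finally show ?thesis
    by (simp add: eq_neg_iff_add_eq_0)
qed

lemma field_embedding_power: "field_embedding \<phi> \<Longrightarrow> \<phi> (x ^ n) = \<phi> x ^ n"
  unfolding field_embedding_def by (induction n) simp_all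

lemma field_embedding_sum:
  assumes "field_embedding \<phi>" "finite A"
  shows "\<phi> (\<Sum>x\<in>A. f x) = (\<Sum>x\<in>A. \<phi> (f x))"
  using assms(2)
  by (induction A rule: finite_induct)
     (use assms(1) field_embedding_0 in \<open>auto simp: field_embedding_def\<close>)

theorem proposition8p5:
  fixes \<phi> :: "'f::{finite,field} \<Rightarrow> 'c::field"
    and k :: int and l t :: nat and r :: 'f and X :: "'f \<Rightarrow> 'c"
  assumes emb: "field_embedding \<phi>"
    and l1: "1 \<le> l" and t1: "1 \<le> t"
    and lk: "int l \<le> k - 2" and tk: "int t \<le> k - 2"
    and kq: "k - 2 \<le> int (card (UNIV::'f set)) - 2"
  shows "(\<Sum>b\<in>(UNIV::'f set). \<Sum>s\<in>UNIV - {b}. \<phi> ((b - r) ^ t / (s - b) ^ l) * X s) =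
    (if l < t then (\<Sum>s\<in>UNIV. (-1) ^ (l + 1) * \<phi> (of_nat (t choose l) * (s - r) ^ (t - l)) * X s)
     else if t = l then (\<Sum>s\<in>UNIV. (-1) ^ (l + 1) * X s)
     else 0)"
proof -
  have q: "l + 2 \<le> card (UNIV::'f set)" "t + 2 \<le> card (UNIV::'f set)"
    using lk tk kq by linarith+
  have \<phi>_hom: "\<phi> 1 = 1" "\<phi> (x * y) = \<phi> x * \<phi> y" for x y
    using emb by (simp_all add: field_embedding_def)
  have "(\<Sum>b\<in>(UNIV::'f set). \<Sum>s\<in>UNIV - {b}. \<phi> ((b - r) ^ t / (s - b) ^ l) * X s)
      = (\<Sum>s\<in>UNIV. \<phi> (\<Sum>b\<in>UNIV - {s}. (b - r) ^ t / (s - b) ^ l) * X s)"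
    using sum.swap_restrict[of UNIV UNIV "\<lambda>b s. \<phi> ((b - r) ^ t / (s - b) ^ l) * X s" "(\<noteq>)"]
    by (simp add: field_embedding_sum[OF emb] sum_distrib_right Collect_neg_eq Diff_eq
        flip: Compl_eq_Diff_UNIV)
  also have "\<dots> = (\<Sum>s\<in>UNIV. \<phi> (if l \<le> t then (-1) ^ (l + 1) *
      (of_nat (t choose l) * (s - r) ^ (t - l)) else 0) * X s)"
    by (simp only: sum_punctured_binomial_quotient[OF q])
  finally show ?thesis
    by (auto simp: \<phi>_hom field_embedding_0[OF emb] field_embedding_minus[OF emb]
        field_embedding_power[OF emb])
qed

end
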